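(* A graph is isomorphic to $KB_m(G)$ for some bipartite graph $G$ if and only if it is an IIC-comparability graph. That is, $KB_m(\text{bipartite})=\text{IIC-comparability}$.
   Context: All graphs are finite and simple. A biclique of a graph $G$ is a set $P\subseteq V(G)$ such that the induced subgraph $G[P]$ is a complete bipartite graph with both parts nonempty, and $P$ is inclusion-maximal with this property. Since $G[P]$ is connected, its bipartition into two nonempty independent sets $X,Y$ (every vertex of $X$ adjacent to every vertex of $Y$) is unique; we write $P=XY$ to mean $P=X\cup Y$ with $X,Y$ these two parts, called the sides of $P$. Two bicliques $P,Q$ of $G$ are mutually included if their sides can be named $P=X_PY_P$, $Q=X_QY_Q$ so that $X_Q\subsetneq X_P$ and $Y_P\subsetneq Y_Q$. The mutually included biclique graph $KB_m(G)$ has the set of bicliques of $G$ as vertex set, two distinct bicliques being adjacent iff they are mutually included. For a poset $\mathcal{P}=(C,\le)$ and $x\in C$, let $I^-_{\mathcal{P}}(x)=\{y\in C: y\le x\}$ and $I^+_{\mathcal{P}}(x)=\{y\in C: x\le y\}$; $\mathcal{P}$ is interval intersection closed (IIC) if for all $u,v\in C$: whenever $I^-_{\mathcal{P}}(u)\cap I^-_{\mathcal{P}}(v)\neq\emptyset$ there is $w\in C$ with $I^-_{\mathcal{P}}(w)=I^-_{\mathcal{P}}(u)\cap I^-_{\mathcal{P}}(v)$, and whenever $I^+_{\mathcal{P}}(u)\cap I^+_{\mathcal{P}}(v)\neq\emptyset$ there is $w\in C$ with $I^+_{\mathcal{P}}(w)=I^+_{\mathcal{P}}(u)\cap I^+_{\mathcal{P}}(v)$.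 The comparability graph of a poset $(C,\le)$ has vertex set $C$, two distinct elements adjacent iff they are comparable. A graph is IIC-comparability if it is the comparability graph of some (finite) IIC poset. *)

theory Defs
  imports Main
begin

type_synonym 'a graph = "'a set \<times> ('a \<times> 'a) set"

definition finite_simple_graph :: "'a graph \<Rightarrow> bool" where
  "finite_simple_graph G \<longleftrightarrow> finite (fst G) \<and> snd G \<subseteq> fst G \<times> fst G
     \<and> (\<forall>x y. (x, y) \<in> snd G \<longrightarrow> (y, x) \<in> snd G) \<and> (\<forall>x. (x, x) \<notin> snd G)"

definition adj :: "'a graph \<Rightarrow> 'a \<Rightarrow> 'a \<Rightarrow> bool" where
  "adj G x y \<longleftrightarrow> (x, y) \<in> snd G"

definition independent :: "'a graph \<Rightarrow> 'a set \<Rightarrow> bool" where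
  "independent G S \<longleftrightarrow> (\<forall>x\<in>S. \<forall>y\<in>S. \<not> adj G x y)"

definition bipartite :: "'a graph \<Rightarrow> bool" where
  "bipartite G \<longleftrightarrow> (\<exists>A B. A \<union> B = fst G \<and> A \<inter> B = {} \<and> independent G A \<and> independent G B)"

definition sides :: "'a graph \<Rightarrow> 'a set \<Rightarrow> 'a set \<Rightarrow> 'a set \<Rightarrow> bool" where
  "sides G P X Y \<longleftrightarrow> X \<noteq> {} \<and> Y \<noteq> {} \<and> X \<inter> Y = {} \<and> X \<union> Y = P
     \<and> independent G X \<and> independent G Y \<and> (\<forall>x\<in>X. \<forall>y\<in>Y. adj G x y)"

definition complete_bipartite_set :: "'a graph \<Rightarrow> 'a set \<Rightarrow> bool" where
  "complete_bipartite_set G P \<longleftrightarrow> P \<subseteq> fst G \<and> (\<exists>X Y. sides G P X Y)"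

definition biclique :: "'a graph \<Rightarrow> 'a set \<Rightarrow> bool" where
  "biclique G P \<longleftrightarrow> complete_bipartite_set G P
     \<and> (\<forall>Q. P \<subset> Q \<longrightarrow> \<not> complete_bipartite_set G Q)"

definition mutually_included :: "'a graph \<Rightarrow> 'a set \<Rightarrow> 'a set \<Rightarrow> bool" where
  "mutually_included G P Q \<longleftrightarrow> (\<exists>XP YP XQ YQ. sides G P XP YP \<and> sides G Q XQ YQ
     \<and> XQ \<subset> XP \<and> YP \<subset> YQ)"

definition KBm :: "'a graph \<Rightarrow> 'a set graph" where
  "KBm G = ({P. biclique G P},
            {(P, Q). biclique G P \<and> biclique G Q \<and> P \<noteq> Q \<and> mutually_included G P Q})"

definition graph_iso :: "'a graph \<Rightarrow> 'b graph \<Rightarrow> bool" where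
  "graph_iso G H \<longleftrightarrow> (\<exists>f. bij_betw f (fst G) (fst H)
     \<and> (\<forall>x\<in>fst G. \<forall>y\<in>fst G. adj G x y \<longleftrightarrow> adj H (f x) (f y)))"

definition partial_order_on_set :: "'a set \<Rightarrow> ('a \<Rightarrow> 'a \<Rightarrow> bool) \<Rightarrow> bool" where
  "partial_order_on_set C le \<longleftrightarrow> (\<forall>x\<in>C. le x x)
     \<and> (\<forall>x\<in>C. \<forall>y\<in>C. le x y \<and> le y x \<longrightarrow> x = y)
     \<and> (\<forall>x\<in>C. \<forall>y\<in>C. \<forall>z\<in>C. le x y \<and> le y z \<longrightarrow> le x z)"

definition Iminus :: "'a set \<Rightarrow> ('a \<Rightarrow> 'a \<Rightarrow> bool) \<Rightarrow> 'a \<Rightarrow> 'a set" where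
  "Iminus C le x = {y\<in>C. le y x}"

definition Iplus :: "'a set \<Rightarrow> ('a \<Rightarrow> 'a \<Rightarrow> bool) \<Rightarrow> 'a \<Rightarrow> 'a set" where
  "Iplus C le x = {y\<in>C. le x y}"

definition IIC :: "'a set \<Rightarrow> ('a \<Rightarrow> 'a \<Rightarrow> bool) \<Rightarrow> bool" where
  "IIC C le \<longleftrightarrow> (\<forall>u\<in>C. \<forall>v\<in>C.
     (Iminus C le u \<inter> Iminus C le v \<noteq> {} \<longrightarrow>
        (\<exists>w\<in>C. Iminus C le w = Iminus C le u \<inter> Iminus C le v))
   \<and> (Iplus C le u \<inter> Iplus C le v \<noteq> {} \<longrightarrow>
        (\<exists>w\<in>C. Iplus C le w = Iplus C le u \<inter> Iplus C le v)))"

definition comparability_graph :: "'a set \<Rightarrow> ('a \<Rightarrow> 'a \<Rightarrow> bool) \<Rightarrow> 'a graph" where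
  "comparability_graph C le =
     (C, {(x, y). x \<in> C \<and> y \<in> C \<and> x \<noteq> y \<and> (le x y \<or> le y x)})"

definition IIC_comparability :: "'a graph \<Rightarrow> bool" where
  "IIC_comparability H \<longleftrightarrow> (\<exists>(C :: nat set) le. finite C \<and> partial_order_on_set C le
     \<and> IIC C le \<and> graph_iso H (comparability_graph C le))"

end

theory Submission
  imports Defs
begin

text \<open>
  Fix a bipartition \<open>(A, B)\<close> of \<open>G\<close>. Each side of a biclique is the common neighbourhood
  of the other, so a biclique is determined by its \<open>A\<close>-side, \<open>A\<close>-sides and \<open>B\<close>-sides of
  bicliques are ordered oppositely, and two bicliques are mutually included exactly when
  their \<open>A\<close>-sides are strictly nested. Hence \<open>KB\<^sub>m(G)\<close> is the comparability graph of the
  bicliques ordered by inclusion of \<open>A\<close>-sides. This poset is IIC: if the \<open>A\<close>-sides of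
  \<open>u\<close> and \<open>v\<close> both contain the \<open>A\<close>-side of a third biclique, their intersection together
  with its common neighbourhood in \<open>B\<close> is again a biclique; dually for \<open>B\<close>-sides.

  Conversely, a finite IIC poset \<open>(C, \<le>)\<close> is recovered from the bipartite graph on a lower
  and an upper copy of \<open>C\<close> in which \<open>a\<close> is joined to \<open>b\<close> when \<open>a \<le> b\<close>. Its bicliques are
  exactly the sets \<open>\<down>c \<union> \<up>c\<close>: the lower side of a biclique is the intersection of the
  principal ideals \<open>\<down>b\<close> over its upper side, which by IIC is a principal ideal \<open>\<down>w\<close>, and
  then its upper side is \<open>\<up>w\<close>. So \<open>c \<mapsto> \<down>c \<union> \<up>c\<close> is an order isomorphism onto the
  bicliques.
\<close>

section \<open>Intervals of a poset\<close>

definition lower_interval_closed :: "'a set \<Rightarrow> ('a \<Rightarrow> 'a \<Rightarrow> bool) \<Rightarrow> bool" where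
  "lower_interval_closed C le \<longleftrightarrow> (\<forall>u\<in>C. \<forall>v\<in>C. Iminus C le u \<inter> Iminus C le v \<noteq> {} \<longrightarrow>
     (\<exists>w\<in>C. Iminus C le w = Iminus C le u \<inter> Iminus C le v))"

lemma Iplus_eq_Iminus_dual: "Iplus C le = Iminus C (\<lambda>x y. le y x)"
  by (simp add: Iplus_def Iminus_def fun_eq_iff)

lemma IIC_iff_lower_interval_closed:
  "IIC C le \<longleftrightarrow> lower_interval_closed C le \<and> lower_interval_closed C (\<lambda>x y. le y x)"
  unfolding IIC_def lower_interval_closed_def Iplus_eq_Iminus_dual by blast

lemma lower_interval_closed_cong:
  assumes "\<And>x y. x \<in> C \<Longrightarrow> y \<in> C \<Longrightarrow> le x y \<longleftrightarrow> le' x y"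
  shows "lower_interval_closed C le \<longleftrightarrow> lower_interval_closed C le'"
proof -
  have "Iminus C le x = Iminus C le' x" if "x \<in> C" for x
    using assms that by (auto simp: Iminus_def)
  then show ?thesis unfolding lower_interval_closed_def by (metis (no_types, lifting))
qed

lemma lower_interval_closed_Inter:
  assumes lic: "lower_interval_closed C le" and "finite F" "F \<noteq> {}" "F \<subseteq> C"
    and "(\<Inter>u\<in>F. Iminus C le u) \<noteq> {}"
  shows "\<exists>w\<in>C. Iminus C le w = (\<Inter>u\<in>F. Iminus C le u)"
  using assms(2-)
proof (induction F rule: finite_ne_induct)
  case (singleton u)
  then show ?case by auto
next
  case (insert u F)
  then obtain w' where "w' \<in> C" "Iminus C le w' = (\<Inter>v\<in>F. Iminus C le v)" by auto
  with insert.prems lic obtain w where "w \<in> C" "Iminus C le w = Iminus C le u \<inter> Iminus C le w'"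
    unfolding lower_interval_closed_def by (metis INF_insert insert_subset)
  with \<open>Iminus C le w' = _\<close> show ?case by auto
qed

lemma upper_bounds_Iminus:
  assumes "partial_order_on_set C le" and "c \<in> C"
  shows "{b\<in>C. \<forall>a\<in>Iminus C le c. le a b} = Iplus C le c"
  using assms unfolding partial_order_on_set_def Iminus_def Iplus_def by blast

lemma lower_bounds_Iplus:
  assumes "partial_order_on_set C le" and "c \<in> C"
  shows "{a\<in>C. \<forall>b\<in>Iplus C le c. le a b} = Iminus C le c"
  using assms unfolding partial_order_on_set_def Iminus_def Iplus_def by blast

lemma Iminus_subset_iff:
  assumes "partial_order_on_set C le" and "c \<in> C" "d \<in> C"
  shows "Iminus C le c \<subseteq> Iminus C le d \<longleftrightarrow> le c d"
  using assms unfolding partial_order_on_set_def Iminus_def by blast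

lemma principal_if_closed_pair:
  assumes fin: "finite C" and po: "partial_order_on_set C le" and lic: "lower_interval_closed C le"
    and ne: "L \<noteq> {}" "U \<noteq> {}"
    and L: "L = {a\<in>C. \<forall>b\<in>U. le a b}" and U: "U = {b\<in>C. \<forall>a\<in>L. le a b}"
  shows "\<exists>w\<in>C. L = Iminus C le w \<and> U = Iplus C le w"
proof -
  have UC: "U \<subseteq> C" unfolding U by blast
  have "L = (\<Inter>u\<in>U. Iminus C le u)" using ne(2) unfolding L Iminus_def by blast
  then obtain w where w: "w \<in> C" "Iminus C le w = L"
    using lower_interval_closed_Inter[OF lic finite_subset[OF UC fin] ne(2) UC] ne(1) by auto
  then have "w \<in> L" using po unfolding Iminus_def partial_order_on_set_def by blast
  then have wU: "\<forall>b\<in>U. le w b" unfolding L by blast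
  have "Iplus C le w \<subseteq> U"
  proof
    fix b assume "b \<in> Iplus C le w"
    then have "b \<in> C" "le w b" by (auto simp: Iplus_def)
    moreover have "le a w" "a \<in> C" if "a \<in> L" for a using that w(2) by (auto simp: Iminus_def)
    ultimately have "\<forall>a\<in>L. le a b" using po w(1) unfolding partial_order_on_set_def by blast
    with \<open>b \<in> C\<close> show "b \<in> U" unfolding U by blast
  qed
  moreover have "U \<subseteq> Iplus C le w" using UC wU by (auto simp: Iplus_def)
  ultimately show ?thesis using w by blast
qed

section \<open>Order isomorphisms\<close>

definition order_iso ::
  "('a \<Rightarrow> 'b) \<Rightarrow> 'a set \<Rightarrow> ('a \<Rightarrow> 'a \<Rightarrow> bool) \<Rightarrow> 'b set \<Rightarrow> ('b \<Rightarrow> 'b \<Rightarrow> bool) \<Rightarrow> bool" where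
  "order_iso f C le D le' \<longleftrightarrow> bij_betw f C D \<and> (\<forall>x\<in>C. \<forall>y\<in>C. le' (f x) (f y) \<longleftrightarrow> le x y)"

lemma order_isoI:
  assumes po: "partial_order_on_set C le" and D: "f ` C = D"
    and le: "\<And>x y. x \<in> C \<Longrightarrow> y \<in> C \<Longrightarrow> le' (f x) (f y) \<longleftrightarrow> le x y"
  shows "order_iso f C le D le'"
proof -
  have "inj_on f C"
  proof (rule inj_onI)
    fix x y assume xy: "x \<in> C" "y \<in> C" "f x = f y"
    have "le' (f y) (f y)" using le[of y y] po xy(2) by (simp add: partial_order_on_set_def)
    then have "le x y" "le y x" using le[OF xy(1,2)] le[OF xy(2,1)] xy(3) by simp_all
    with xy po show "x = y" unfolding partial_order_on_set_def by blast
  qed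
  with D le show ?thesis unfolding order_iso_def bij_betw_def by simp
qed

lemma order_iso_dual:
  "order_iso f C le D le' \<Longrightarrow> order_iso f C (\<lambda>x y. le y x) D (\<lambda>x y. le' y x)"
  by (simp add: order_iso_def)

lemma order_iso_partial_order:
  assumes iso: "order_iso f C le D le'" and po: "partial_order_on_set C le"
  shows "partial_order_on_set D le'"
proof -
  have D: "D = f ` C" and le: "\<And>x y. x \<in> C \<Longrightarrow> y \<in> C \<Longrightarrow> le' (f x) (f y) \<longleftrightarrow> le x y"
    using iso unfolding order_iso_def bij_betw_def by blast+
  show ?thesis unfolding partial_order_on_set_def D Ball_image_comp o_def
  proof (intro conjI ballI impI)
    fix x y z assume "x \<in> C" "y \<in> C" "z \<in> C"
    with po le show "le' (f x) (f x)"
      and "le' (f x) (f y) \<and> le' (f y) (f x) \<Longrightarrow> f x = f y"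
      and "le' (f x) (f y) \<and> le' (f y) (f z) \<Longrightarrow> le' (f x) (f z)"
      unfolding partial_order_on_set_def by metis+
  qed
qed

lemma order_iso_Iminus:
  assumes "order_iso f C le D le'" and "x \<in> C"
  shows "Iminus D le' (f x) = f ` Iminus C le x"
  using assms by (auto simp: order_iso_def bij_betw_def Iminus_def)

lemma order_iso_lower_interval_closed:
  assumes iso: "order_iso f C le D le'" and lic: "lower_interval_closed C le"
  shows "lower_interval_closed D le'"
  unfolding lower_interval_closed_def
proof (intro ballI impI)
  have inj: "inj_on f C" and D: "D = f ` C" using iso by (auto simp: order_iso_def bij_betw_def)
  have I: "Iminus C le x \<subseteq> C" for x by (auto simp: Iminus_def)
  fix m n assume "m \<in> D" "n \<in> D" and ne: "Iminus D le' m \<inter> Iminus D le' n \<noteq> {}"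
  then obtain u v where uv: "u \<in> C" "v \<in> C" "m = f u" "n = f v" using D by blast
  have meet: "Iminus D le' m \<inter> Iminus D le' n = f ` (Iminus C le u \<inter> Iminus C le v)"
    unfolding uv(3,4) order_iso_Iminus[OF iso uv(1)] order_iso_Iminus[OF iso uv(2)]
    using inj_on_image_Int[OF inj I I] by simp
  then obtain w where "w \<in> C" "Iminus C le w = Iminus C le u \<inter> Iminus C le v"
    using lic ne uv(1,2) unfolding lower_interval_closed_def by force
  then show "\<exists>w\<in>D. Iminus D le' w = Iminus D le' m \<inter> Iminus D le' n"
    using order_iso_Iminus[OF iso] meet D by (metis image_eqI)
qed

lemma order_iso_IIC: "order_iso f C le D le' \<Longrightarrow> IIC C le \<Longrightarrow> IIC D le'"
  unfolding IIC_iff_lower_interval_closed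
  using order_iso_lower_interval_closed order_iso_dual by blast

lemma graph_iso_comparability_graph:
  assumes "order_iso f C le D le'"
  shows "graph_iso (comparability_graph C le) (comparability_graph D le')"
proof -
  have "bij_betw f C D" and le: "\<forall>x\<in>C. \<forall>y\<in>C. le' (f x) (f y) \<longleftrightarrow> le x y"
    using assms by (auto simp: order_iso_def)
  moreover from \<open>bij_betw f C D\<close> have "f x = f y \<longleftrightarrow> x = y" if "x \<in> C" "y \<in> C" for x y
    using that by (auto simp: bij_betw_def inj_on_def)
  ultimately show ?thesis
    unfolding graph_iso_def comparability_graph_def adj_def by (auto simp: bij_betw_apply)
qed

lemma graph_iso_trans:
  assumes "graph_iso G1 G2" "graph_iso G2 G3"
  shows "graph_iso G1 G3"
proof -
  obtain f where f: "bij_betw f (fst G1) (fst G2)"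
    "\<forall>x\<in>fst G1. \<forall>y\<in>fst G1. adj G1 x y \<longleftrightarrow> adj G2 (f x) (f y)"
    using assms(1) unfolding graph_iso_def by blast
  obtain g where g: "bij_betw g (fst G2) (fst G3)"
    "\<forall>x\<in>fst G2. \<forall>y\<in>fst G2. adj G2 x y \<longleftrightarrow> adj G3 (g x) (g y)"
    using assms(2) unfolding graph_iso_def by blast
  have "bij_betw (g \<circ> f) (fst G1) (fst G3)" using f(1) g(1) by (rule bij_betw_trans)
  moreover have "adj G1 x y \<longleftrightarrow> adj G3 (g (f x)) (g (f y))" if "x \<in> fst G1" "y \<in> fst G1" for x y
    using f g that bij_betw_apply[OF f(1)] by simp
  ultimately show ?thesis unfolding graph_iso_def by auto
qed

lemma IIC_comparabilityI:
  fixes C :: "'b set"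
  assumes fin: "finite C" and po: "partial_order_on_set C le" and iic: "IIC C le"
    and iso: "graph_iso H (comparability_graph C le)"
  shows "IIC_comparability H"
proof -
  obtain f :: "'b \<Rightarrow> nat" where inj: "inj_on f C"
    using finite_imp_inj_to_nat_seg[OF fin] by blast
  define le' where "le' m n \<longleftrightarrow> (\<exists>x\<in>C. \<exists>y\<in>C. m = f x \<and> n = f y \<and> le x y)" for m n
  have iso': "order_iso f C le (f ` C) le'"
  proof (rule order_isoI[OF po refl])
    fix x y assume "x \<in> C" "y \<in> C"
    then show "le' (f x) (f y) \<longleftrightarrow> le x y"
      unfolding le'_def by (auto dest: inj_onD[OF inj])
  qed
  have "finite (f ` C)" "partial_order_on_set (f ` C) le'" "IIC (f ` C) le'"
    "graph_iso H (comparability_graph (f ` C) le')"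
    using fin order_iso_partial_order[OF iso' po] order_iso_IIC[OF iso' iic]
      graph_iso_trans[OF iso graph_iso_comparability_graph[OF iso']] by simp_all
  then show ?thesis unfolding IIC_comparability_def by blast
qed

section \<open>Bicliques of a bipartite graph\<close>

definition bipartition :: "'a graph \<Rightarrow> 'a set \<Rightarrow> 'a set \<Rightarrow> bool" where
  "bipartition G A B \<longleftrightarrow> (\<forall>x y. adj G x y \<longrightarrow> adj G y x) \<and> A \<union> B = fst G \<and> A \<inter> B = {}
     \<and> independent G A \<and> independent G B"

definition common_nbrs :: "'a graph \<Rightarrow> 'a set \<Rightarrow> 'a set" where
  "common_nbrs G S = {y. \<forall>x\<in>S. adj G x y}"

lemma bipartite_iff_bipartition:
  "finite_simple_graph G \<Longrightarrow> bipartite G \<longleftrightarrow> (\<exists>A B. bipartition G A B)"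
  unfolding bipartite_def bipartition_def finite_simple_graph_def adj_def by blast

lemma bipartition_swap: "bipartition G A B \<Longrightarrow> bipartition G B A"
  by (auto simp: bipartition_def)

lemma bipartition_adj_sym: "bipartition G A B \<Longrightarrow> adj G x y \<Longrightarrow> adj G y x"
  by (simp add: bipartition_def)

lemma common_nbrs_antimono: "S \<subseteq> T \<Longrightarrow> common_nbrs G T \<subseteq> common_nbrs G S"
  by (auto simp: common_nbrs_def)

lemma sides_swap:
  assumes bp: "bipartition G A B" and s: "sides G P X Y"
  shows "sides G P Y X"
proof -
  have "\<forall>y\<in>Y. \<forall>x\<in>X. adj G y x"
    using s bipartition_adj_sym[OF bp] unfolding sides_def by metis
  with s show ?thesis unfolding sides_def by (simp add: Un_commute Int_commute)
qed

lemma sides_eq_Int_if_mem: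
  assumes bp: "bipartition G A B" and P: "P \<subseteq> fst G" and s: "sides G P X Y"
    and x: "x \<in> X" "x \<in> A"
  shows "X = P \<inter> A \<and> Y = P \<inter> B"
proof -
  have XY: "X \<union> Y = P" "X \<inter> Y = {}" and cross: "\<forall>x\<in>X. \<forall>y\<in>Y. adj G x y"
    using s by (auto simp: sides_def)
  have V: "A \<union> B = fst G" "A \<inter> B = {}" and indep: "independent G A" "independent G B"
    using bp by (auto simp: bipartition_def)
  have "Y \<subseteq> B"
  proof
    fix y assume "y \<in> Y"
    with x cross indep(1) have "y \<notin> A" by (auto simp: independent_def)
    with \<open>y \<in> Y\<close> XY P V show "y \<in> B" by blast
  qed
  moreover obtain y where "y \<in> Y" using s by (auto simp: sides_def)
  ultimately have "y \<in> B" by blast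
  have "X \<subseteq> A"
  proof
    fix x' assume "x' \<in> X"
    with \<open>y \<in> Y\<close> \<open>y \<in> B\<close> cross indep(2) have "x' \<notin> B" by (auto simp: independent_def)
    with \<open>x' \<in> X\<close> XY P V show "x' \<in> A" by blast
  qed
  with \<open>Y \<subseteq> B\<close> show ?thesis using XY V by blast
qed

lemma complete_bipartite_set_sides:
  assumes bp: "bipartition G A B" and "complete_bipartite_set G P"
  shows "sides G P (P \<inter> A) (P \<inter> B)"
proof -
  obtain X Y where s: "sides G P X Y" and P: "P \<subseteq> fst G"
    using assms(2) unfolding complete_bipartite_set_def by blast
  obtain x where x: "x \<in> X" using s by (auto simp: sides_def)
  then have "x \<in> A \<or> x \<in> B" using s P bp by (auto simp: sides_def bipartition_def)
  then show ?thesis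
  proof
    assume "x \<in> A"
    with sides_eq_Int_if_mem[OF bp P s x] s show ?thesis by simp
  next
    assume "x \<in> B"
    with sides_eq_Int_if_mem[OF bipartition_swap[OF bp] P s x] sides_swap[OF bp s] show ?thesis
      by simp
  qed
qed

lemma biclique_subset: "biclique G P \<Longrightarrow> P \<subseteq> fst G"
  by (auto simp: biclique_def complete_bipartite_set_def)

lemma biclique_sides: "bipartition G A B \<Longrightarrow> biclique G P \<Longrightarrow> sides G P (P \<inter> A) (P \<inter> B)"
  by (auto simp: biclique_def intro: complete_bipartite_set_sides)

lemma biclique_side_closed:
  assumes bp: "bipartition G A B" and P: "biclique G P"
  shows "P \<inter> B = B \<inter> common_nbrs G (P \<inter> A)"
proof
  have s: "sides G P (P \<inter> A) (P \<inter> B)" by (rule biclique_sides[OF bp P])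
  then show "P \<inter> B \<subseteq> B \<inter> common_nbrs G (P \<inter> A)"
    by (auto simp: sides_def common_nbrs_def)
  show "B \<inter> common_nbrs G (P \<inter> A) \<subseteq> P \<inter> B"
  proof (rule ccontr)
    assume "\<not> ?thesis"
    then obtain y where y: "y \<in> B" "y \<notin> P" "\<forall>x\<in>P \<inter> A. adj G x y"
      by (auto simp: common_nbrs_def)
    have PV: "P \<subseteq> fst G" by (rule biclique_subset[OF P])
    have V: "A \<union> B = fst G" "A \<inter> B = {}" and indep: "independent G A" "independent G B"
      using bp by (auto simp: bipartition_def)
    have "sides G (insert y P) (P \<inter> A) (insert y (P \<inter> B))"
      using s y V PV indep by (auto simp: sides_def independent_def)
    then have "complete_bipartite_set G (insert y P)"
      using PV V y unfolding complete_bipartite_set_def by blast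
    with P y(2) show False unfolding biclique_def by blast
  qed
qed

lemma biclique_if_closed:
  assumes bp: "bipartition G A B" and ne: "S \<noteq> {}" "T \<noteq> {}"
    and T: "T = B \<inter> common_nbrs G S" and S: "S = A \<inter> common_nbrs G T"
  shows "biclique G (S \<union> T)"
proof -
  have V: "A \<union> B = fst G" "A \<inter> B = {}" and indep: "independent G A" "independent G B"
    using bp by (auto simp: bipartition_def)
  have SA: "S \<subseteq> A" and TB: "T \<subseteq> B" using S T by (metis inf_le1)+
  have cross: "\<forall>x\<in>S. \<forall>y\<in>T. adj G x y" using T unfolding common_nbrs_def by blast
  have "sides G (S \<union> T) S T"
    unfolding sides_def
  proof (intro conjI)
    show "S \<inter> T = {}" using SA TB V by blast
    show "independent G S" "independent G T"
      using indep SA TB unfolding independent_def by blast+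
  qed (use ne cross in auto)
  then have cb: "complete_bipartite_set G (S \<union> T)"
    using SA TB V unfolding complete_bipartite_set_def by blast
  have "\<not> complete_bipartite_set G Q" if ST: "S \<union> T \<subset> Q" for Q
  proof
    assume "complete_bipartite_set G Q"
    then have sQ: "sides G Q (Q \<inter> A) (Q \<inter> B)" and QV: "Q \<subseteq> A \<union> B"
      using complete_bipartite_set_sides[OF bp] V by (auto simp: complete_bipartite_set_def)
    have "Q \<inter> B \<subseteq> B \<inter> common_nbrs G (Q \<inter> A)"
      using sQ unfolding sides_def common_nbrs_def by blast
    also have "\<dots> \<subseteq> T"
      using common_nbrs_antimono[of S "Q \<inter> A"] ST SA T by blast
    finally have "Q \<inter> B \<subseteq> T" .
    have "Q \<inter> A \<subseteq> A \<inter> common_nbrs G (Q \<inter> B)"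
      using sQ bipartition_adj_sym[OF bp] unfolding sides_def common_nbrs_def by blast
    also have "\<dots> \<subseteq> S"
      using common_nbrs_antimono[of T "Q \<inter> B"] ST TB S by blast
    finally have "Q \<inter> A \<subseteq> S" .
    with \<open>Q \<inter> B \<subseteq> T\<close> ST QV show False by blast
  qed
  with cb show ?thesis unfolding biclique_def by blast
qed

lemma biclique_side_antimono:
  assumes bp: "bipartition G A B" and P: "biclique G P" and Q: "biclique G Q"
    and "P \<inter> A \<subseteq> Q \<inter> A"
  shows "Q \<inter> B \<subseteq> P \<inter> B"
  unfolding biclique_side_closed[OF bp P] biclique_side_closed[OF bp Q]
  using common_nbrs_antimono[OF assms(4)] by blast

lemma biclique_side_le_iff:
  assumes bp: "bipartition G A B" and P: "biclique G P" and Q: "biclique G Q"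
  shows "P \<inter> A \<subseteq> Q \<inter> A \<longleftrightarrow> Q \<inter> B \<subseteq> P \<inter> B"
  using biclique_side_antimono[OF bp P Q] biclique_side_antimono[OF bipartition_swap[OF bp] Q P]
  by blast

lemma biclique_eqI:
  assumes bp: "bipartition G A B" and P: "biclique G P" and Q: "biclique G Q"
    and A: "P \<inter> A = Q \<inter> A"
  shows "P = Q"
proof -
  have "P \<inter> B = Q \<inter> B"
    unfolding biclique_side_closed[OF bp P] biclique_side_closed[OF bp Q] A ..
  moreover have "P \<subseteq> A \<union> B" "Q \<subseteq> A \<union> B"
    using biclique_subset[OF P] biclique_subset[OF Q] bp by (auto simp: bipartition_def)
  ultimately show ?thesis using A by blast
qed

lemma mutually_included_sym:
  assumes bp: "bipartition G A B" and "mutually_included G P Q"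
  shows "mutually_included G Q P"
proof -
  obtain XP YP XQ YQ where "sides G P XP YP" "sides G Q XQ YQ" "XQ \<subset> XP" "YP \<subset> YQ"
    using assms(2) unfolding mutually_included_def by blast
  then have "sides G Q YQ XQ" "sides G P YP XP" "YP \<subset> YQ" "XQ \<subset> XP"
    using sides_swap[OF bp] by blast+
  then show ?thesis unfolding mutually_included_def by blast
qed

lemma mutually_included_iff:
  assumes bp: "bipartition G A B" and P: "biclique G P" and Q: "biclique G Q"
  shows "mutually_included G P Q \<longleftrightarrow> P \<inter> A \<subset> Q \<inter> A \<or> Q \<inter> A \<subset> P \<inter> A"
proof
  assume "mutually_included G P Q"
  then obtain XP YP XQ YQ where sP: "sides G P XP YP" and sQ: "sides G Q XQ YQ"
    and X: "XQ \<subset> XP" and Y: "YP \<subset> YQ" unfolding mutually_included_def by blast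
  obtain x where x: "x \<in> XQ" "x \<in> XP" using sQ X unfolding sides_def by blast
  have "x \<in> A \<or> x \<in> B" using x biclique_subset[OF P] sP bp
    unfolding sides_def bipartition_def by blast
  then show "P \<inter> A \<subset> Q \<inter> A \<or> Q \<inter> A \<subset> P \<inter> A"
  proof
    assume "x \<in> A"
    then have "XP = P \<inter> A" "XQ = Q \<inter> A"
      using sides_eq_Int_if_mem[OF bp biclique_subset[OF P] sP x(2)]
        sides_eq_Int_if_mem[OF bp biclique_subset[OF Q] sQ x(1)] by blast+
    with X show ?thesis by blast
  next
    assume "x \<in> B"
    then have "YP = P \<inter> A" "YQ = Q \<inter> A"
      using sides_eq_Int_if_mem[OF bipartition_swap[OF bp] biclique_subset[OF P] sP x(2)]
        sides_eq_Int_if_mem[OF bipartition_swap[OF bp] biclique_subset[OF Q] sQ x(1)] by blast+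
    with Y show ?thesis by blast
  qed
next
  have "mutually_included G P Q" if P: "biclique G P" and Q: "biclique G Q"
    and less: "Q \<inter> A \<subset> P \<inter> A" for P Q
  proof -
    have "P \<inter> B \<subseteq> Q \<inter> B" using biclique_side_antimono[OF bp Q P] less by blast
    moreover have "P \<inter> B \<noteq> Q \<inter> B"
      using biclique_eqI[OF bipartition_swap[OF bp] P Q] less by blast
    ultimately show ?thesis unfolding mutually_included_def
      using biclique_sides[OF bp P] biclique_sides[OF bp Q] less by blast
  qed
  then show "P \<inter> A \<subset> Q \<inter> A \<or> Q \<inter> A \<subset> P \<inter> A \<Longrightarrow> mutually_included G P Q"
    using P Q mutually_included_sym[OF bp] by blast
qed

lemma KBm_eq_comparability_graph:
  assumes bp: "bipartition G A B"
  shows "KBm G = comparability_graph {P. biclique G P} (\<lambda>P Q. P \<inter> A \<subseteq> Q \<inter> A)"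
proof -
  have "mutually_included G P Q \<longleftrightarrow> P \<inter> A \<subseteq> Q \<inter> A \<or> Q \<inter> A \<subseteq> P \<inter> A"
    if P: "biclique G P" and Q: "biclique G Q" and "P \<noteq> Q" for P Q
  proof -
    have "P \<inter> A \<noteq> Q \<inter> A" using biclique_eqI[OF bp P Q] \<open>P \<noteq> Q\<close> by blast
    then show ?thesis using mutually_included_iff[OF bp P Q] by blast
  qed
  then show ?thesis unfolding KBm_def comparability_graph_def by auto
qed

lemma partial_order_bicliques:
  "bipartition G A B \<Longrightarrow> partial_order_on_set {P. biclique G P} (\<lambda>P Q. P \<inter> A \<subseteq> Q \<inter> A)"
  unfolding partial_order_on_set_def using biclique_eqI[of G A B] by blast

lemma finite_bicliques: "finite (fst G) \<Longrightarrow> finite {P. biclique G P}"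
  by (rule finite_subset[of _ "Pow (fst G)"]) (auto dest: biclique_subset)

lemma biclique_meet:
  assumes bp: "bipartition G A B" and u: "biclique G u" and v: "biclique G v"
    and P: "biclique G P" "P \<inter> A \<subseteq> u \<inter> v \<inter> A"
  shows "\<exists>w. biclique G w \<and> w \<inter> A = u \<inter> v \<inter> A"
proof -
  define S where "S = u \<inter> v \<inter> A"
  define T where "T = B \<inter> common_nbrs G S"
  have "S \<noteq> {}" using biclique_sides[OF bp P(1)] P(2) unfolding sides_def S_def by blast
  have "S \<subseteq> u \<inter> A" "S \<subseteq> v \<inter> A" by (auto simp: S_def)
  then have uT: "u \<inter> B \<subseteq> T" and vT: "v \<inter> B \<subseteq> T"
    unfolding T_def biclique_side_closed[OF bp u] biclique_side_closed[OF bp v]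
    using common_nbrs_antimono by blast+
  then have "T \<noteq> {}" using biclique_sides[OF bp u] unfolding sides_def by blast
  have "S = A \<inter> common_nbrs G T"
  proof
    show "S \<subseteq> A \<inter> common_nbrs G T"
      using bipartition_adj_sym[OF bp] by (auto simp: S_def T_def common_nbrs_def)
    have "A \<inter> common_nbrs G T \<subseteq> A \<inter> common_nbrs G (u \<inter> B) \<inter> common_nbrs G (v \<inter> B)"
      using common_nbrs_antimono[OF uT] common_nbrs_antimono[OF vT] by blast
    also have "\<dots> = S"
      using biclique_side_closed[OF bipartition_swap[OF bp] u]
        biclique_side_closed[OF bipartition_swap[OF bp] v] unfolding S_def by blast
    finally show "A \<inter> common_nbrs G T \<subseteq> S" .
  qed
  then have "biclique G (S \<union> T)"
    using biclique_if_closed[OF bp \<open>S \<noteq> {}\<close> \<open>T \<noteq> {}\<close> T_def] by blast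
  moreover have "(S \<union> T) \<inter> A = S" using bp by (auto simp: S_def T_def bipartition_def)
  ultimately show ?thesis unfolding S_def by blast
qed

lemma lower_interval_closed_bicliques:
  assumes bp: "bipartition G A B"
  shows "lower_interval_closed {P. biclique G P} (\<lambda>P Q. P \<inter> A \<subseteq> Q \<inter> A)"
  unfolding lower_interval_closed_def
proof (intro ballI impI)
  let ?I = "Iminus {P. biclique G P} (\<lambda>P Q. P \<inter> A \<subseteq> Q \<inter> A)"
  fix u v assume "u \<in> {P. biclique G P}" "v \<in> {P. biclique G P}" "?I u \<inter> ?I v \<noteq> {}"
  then obtain P where "biclique G u" "biclique G v" "biclique G P" "P \<inter> A \<subseteq> u \<inter> v \<inter> A"
    unfolding Iminus_def by blast
  then obtain w where "biclique G w" "w \<inter> A = u \<inter> v \<inter> A"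
    using biclique_meet[OF bp] by blast
  moreover have "?I w = ?I u \<inter> ?I v" using calculation(2) unfolding Iminus_def by blast
  ultimately show "\<exists>w\<in>{P. biclique G P}. ?I w = ?I u \<inter> ?I v" by blast
qed

lemma IIC_bicliques:
  assumes bp: "bipartition G A B"
  shows "IIC {P. biclique G P} (\<lambda>P Q. P \<inter> A \<subseteq> Q \<inter> A)"
proof -
  have "lower_interval_closed {P. biclique G P} (\<lambda>P Q. Q \<inter> A \<subseteq> P \<inter> A)
    \<longleftrightarrow> lower_interval_closed {P. biclique G P} (\<lambda>P Q. P \<inter> B \<subseteq> Q \<inter> B)"
    by (rule lower_interval_closed_cong) (rule biclique_side_le_iff[OF bp]; simp)
  then show ?thesis
    unfolding IIC_iff_lower_interval_closed
    using lower_interval_closed_bicliques[OF bp] lower_interval_closed_bicliques[OF bipartition_swap[OF bp]]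
    by blast
qed

section \<open>The bipartite graph of a poset\<close>

definition low :: "nat \<Rightarrow> nat" where
  "low a = 2 * a"

definition high :: "nat \<Rightarrow> nat" where
  "high b = 2 * b + 1"

definition order_bigraph :: "nat set \<Rightarrow> (nat \<Rightarrow> nat \<Rightarrow> bool) \<Rightarrow> nat graph" where
  "order_bigraph C le = (low ` C \<union> high ` C,
     {(low a, high b) | a b. a \<in> C \<and> b \<in> C \<and> le a b}
     \<union> {(high b, low a) | a b. a \<in> C \<and> b \<in> C \<and> le a b})"

definition principal_biclique :: "nat set \<Rightarrow> (nat \<Rightarrow> nat \<Rightarrow> bool) \<Rightarrow> nat \<Rightarrow> nat set" where
  "principal_biclique C le c = low ` Iminus C le c \<union> high ` Iplus C le c"

lemma inj_low: "inj low"
  by (simp add: inj_def low_def)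

lemma inj_high: "inj high"
  by (simp add: inj_def high_def)

lemma low_neq_high [simp]: "low a \<noteq> high b" "high b \<noteq> low a"
  unfolding low_def high_def by presburger+

lemma adj_order_bigraph:
  "adj (order_bigraph C le) x y \<longleftrightarrow>
     (\<exists>a\<in>C. \<exists>b\<in>C. le a b \<and> (x = low a \<and> y = high b \<or> x = high b \<and> y = low a))"
  unfolding adj_def order_bigraph_def by auto

lemma adj_low_high [simp]:
  "adj (order_bigraph C le) (low a) (high b) \<longleftrightarrow> a \<in> C \<and> b \<in> C \<and> le a b"
  "adj (order_bigraph C le) (high b) (low a) \<longleftrightarrow> a \<in> C \<and> b \<in> C \<and> le a b"
  unfolding adj_order_bigraph by (auto simp: inj_eq[OF inj_low] inj_eq[OF inj_high])

lemma vertices_order_bigraph: "fst (order_bigraph C le) = low ` C \<union> high ` C"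
  by (simp add: order_bigraph_def)

lemma finite_simple_graph_order_bigraph: "finite C \<Longrightarrow> finite_simple_graph (order_bigraph C le)"
  unfolding finite_simple_graph_def by (auto simp: order_bigraph_def)

lemma bipartition_order_bigraph: "bipartition (order_bigraph C le) (low ` C) (high ` C)"
  unfolding bipartition_def independent_def vertices_order_bigraph adj_order_bigraph
  by (auto simp: inj_eq[OF inj_low] inj_eq[OF inj_high])

lemma common_nbrs_low:
  "L \<subseteq> C \<Longrightarrow>
    high ` C \<inter> common_nbrs (order_bigraph C le) (low ` L) = high ` {b\<in>C. \<forall>a\<in>L. le a b}"
  by (auto simp: common_nbrs_def)

lemma common_nbrs_high:
  "U \<subseteq> C \<Longrightarrow>
    low ` C \<inter> common_nbrs (order_bigraph C le) (high ` U) = low ` {a\<in>C. \<forall>b\<in>U. le a b}"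
  by (auto simp: common_nbrs_def)

lemma biclique_principal_biclique:
  assumes po: "partial_order_on_set C le" and c: "c \<in> C"
  shows "biclique (order_bigraph C le) (principal_biclique C le c)"
  unfolding principal_biclique_def
proof (rule biclique_if_closed[OF bipartition_order_bigraph])
  have "c \<in> Iminus C le c" "c \<in> Iplus C le c"
    using po c by (auto simp: partial_order_on_set_def Iminus_def Iplus_def)
  then show "low ` Iminus C le c \<noteq> {}" "high ` Iplus C le c \<noteq> {}" by auto
  have sub: "Iminus C le c \<subseteq> C" "Iplus C le c \<subseteq> C" by (auto simp: Iminus_def Iplus_def)
  show "high ` Iplus C le c = high ` C \<inter> common_nbrs (order_bigraph C le) (low ` Iminus C le c)"
    by (simp only: common_nbrs_low[OF sub(1)] upper_bounds_Iminus[OF po c])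
  show "low ` Iminus C le c = low ` C \<inter> common_nbrs (order_bigraph C le) (high ` Iplus C le c)"
    by (simp only: common_nbrs_high[OF sub(2)] lower_bounds_Iplus[OF po c])
qed

lemma principal_biclique_low_side:
  "principal_biclique C le c \<inter> low ` C = low ` Iminus C le c"
  by (auto simp: principal_biclique_def Iminus_def)

lemma biclique_order_bigraph_principal:
  assumes fin: "finite C" and po: "partial_order_on_set C le" and lic: "lower_interval_closed C le"
    and P: "biclique (order_bigraph C le) P"
  shows "\<exists>w\<in>C. P = principal_biclique C le w"
proof -
  define L where "L = {a\<in>C. low a \<in> P}"
  define U where "U = {b\<in>C. high b \<in> P}"
  have LC: "L \<subseteq> C" and UC: "U \<subseteq> C" by (auto simp: L_def U_def)
  have PL: "P \<inter> low ` C = low ` L" and PU: "P \<inter> high ` C = high ` U"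
    by (auto simp: L_def U_def)
  have P_eq: "P = low ` L \<union> high ` U"
    using biclique_subset[OF P] PL PU unfolding vertices_order_bigraph by blast
  have ne: "L \<noteq> {}" "U \<noteq> {}"
    using biclique_sides[OF bipartition_order_bigraph P] unfolding PL PU sides_def by auto
  have "high ` U = high ` {b\<in>C. \<forall>a\<in>L. le a b}"
    using biclique_side_closed[OF bipartition_order_bigraph P] unfolding PL PU common_nbrs_low[OF LC] .
  then have U: "U = {b\<in>C. \<forall>a\<in>L. le a b}" by (simp add: inj_image_eq_iff[OF inj_high])
  have "low ` L = low ` {a\<in>C. \<forall>b\<in>U. le a b}"
    using biclique_side_closed[OF bipartition_swap[OF bipartition_order_bigraph] P]
    unfolding PL PU common_nbrs_high[OF UC] .
  then have L: "L = {a\<in>C. \<forall>b\<in>U. le a b}" by (simp add: inj_image_eq_iff[OF inj_low])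
  obtain w where "w \<in> C" "L = Iminus C le w" "U = Iplus C le w"
    using principal_if_closed_pair[OF fin po lic ne L U] by blast
  then show ?thesis unfolding P_eq principal_biclique_def by blast
qed

lemma order_iso_principal_biclique:
  assumes fin: "finite C" and po: "partial_order_on_set C le" and lic: "lower_interval_closed C le"
  shows "order_iso (principal_biclique C le) C le
    {P. biclique (order_bigraph C le) P} (\<lambda>P Q. P \<inter> low ` C \<subseteq> Q \<inter> low ` C)"
proof (rule order_isoI[OF po])
  show "principal_biclique C le ` C = {P. biclique (order_bigraph C le) P}"
    using biclique_principal_biclique[OF po] biclique_order_bigraph_principal[OF fin po lic]
    by blast
  fix c d assume "c \<in> C" "d \<in> C"
  then show "principal_biclique C le c \<inter> low ` C \<subseteq> principal_biclique C le d \<inter> low ` C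
      \<longleftrightarrow> le c d"
    unfolding principal_biclique_low_side inj_image_subset_iff[OF inj_low]
    by (rule Iminus_subset_iff[OF po])
qed

theorem theorem5:
  fixes H :: "'a graph"
  assumes "finite_simple_graph H"
  shows "(\<exists>G :: nat graph. finite_simple_graph G \<and> bipartite G \<and> graph_iso H (KBm G))
         \<longleftrightarrow> IIC_comparability H"
proof
  assume "\<exists>G :: nat graph. finite_simple_graph G \<and> bipartite G \<and> graph_iso H (KBm G)"
  then obtain G :: "nat graph" and A B where G: "finite_simple_graph G" "bipartition G A B"
    and iso: "graph_iso H (KBm G)"
    using bipartite_iff_bipartition by blast
  from G(1) have "finite {P. biclique G P}"
    by (intro finite_bicliques) (simp add: finite_simple_graph_def)
  with iso show "IIC_comparability H"
    unfolding KBm_eq_comparability_graph[OF G(2)]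
    using IIC_comparabilityI partial_order_bicliques[OF G(2)] IIC_bicliques[OF G(2)] by blast
next
  assume "IIC_comparability H"
  then obtain C :: "nat set" and le where C: "finite C" "partial_order_on_set C le" "IIC C le"
    and iso: "graph_iso H (comparability_graph C le)"
    unfolding IIC_comparability_def by blast
  let ?G = "order_bigraph C le"
  have "graph_iso (comparability_graph C le) (KBm ?G)"
    unfolding KBm_eq_comparability_graph[OF bipartition_order_bigraph]
    using C order_iso_principal_biclique graph_iso_comparability_graph
    unfolding IIC_iff_lower_interval_closed by blast
  moreover have "finite_simple_graph ?G" "bipartite ?G"
    using finite_simple_graph_order_bigraph[OF C(1)] bipartite_iff_bipartition
      bipartition_order_bigraph by blast+
  ultimately show "\<exists>G :: nat graph. finite_simple_graph G \<and> bipartite G \<and> graph_iso H (KBm G)"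
    using graph_iso_trans[OF iso] by blast
qed

end
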